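(* There is no nonnegative bivariate information decomposition $(SI,UI,CI)$ in which $UI$ satisfies the Blackwell property and $SI$ satisfies left monotonicity.
   Context: All random variables have finite alphabets. A nonnegative bivariate information decomposition consists of nonnegative functions $SI(S;X_1,X_2)$, $UI(S;X_1\setminus X_2)$, $UI(S;X_2\setminus X_1)$, $CI(S;X_1,X_2)$, defined for every joint distribution of $(S,X_1,X_2)$ with arbitrary finite alphabets and depending continuously on it, such that $I(S;X_1X_2)=SI(S;X_1,X_2)+CI(S;X_1,X_2)+UI(S;X_1\setminus X_2)+UI(S;X_2\setminus X_1)$, $I(S;X_1)=SI(S;X_1,X_2)+UI(S;X_1\setminus X_2)$ and $I(S;X_2)=SI(S;X_1,X_2)+UI(S;X_2\setminus X_1)$, where $I$ denotes mutual information. $UI$ has the Blackwell property if for every joint distribution $P_{SX_1X_2}$: $UI(S;X_1\setminus X_2)=0$ if and only if there exists a random variable $X_1'$ such that $S - X_2 - X_1'$ is a Markov chain and $P_{SX_1'}=P_{SX_1}$. $SI$ satisfies left monotonicity if $SI(S;X_1,X_2)\ge SI(f(S);X_1,X_2)$ for all $(S,X_1,X_2)$ and every function $f$ on the alphabet of $S$. *)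

theory Defs
  imports "HOL-Probability.Probability_Mass_Function"
begin

text \<open>Joint distributions of (S, X1, X2) with finite alphabets are encoded as
  finitely supported pmfs on nat triples (every finite alphabet embeds into nat).\<close>

type_synonym dist3 = "(nat \<times> nat \<times> nat) pmf"

definition fin_dist :: "'a pmf \<Rightarrow> bool" where
  "fin_dist P \<longleftrightarrow> finite (set_pmf P)"

definition mutual_info :: "('a \<times> 'b) pmf \<Rightarrow> real" where
  "mutual_info Q = (\<Sum>(a,b)\<in>set_pmf Q.
     pmf Q (a,b) * log 2 (pmf Q (a,b) / (pmf (map_pmf fst Q) a * pmf (map_pmf snd Q) b)))"

definition I_S_X1X2 :: "dist3 \<Rightarrow> real" where
  "I_S_X1X2 P = mutual_info (map_pmf (\<lambda>(s,x1,x2). (s,(x1,x2))) P)"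

definition I_S_X1 :: "dist3 \<Rightarrow> real" where
  "I_S_X1 P = mutual_info (map_pmf (\<lambda>(s,x1,x2). (s,x1)) P)"

definition I_S_X2 :: "dist3 \<Rightarrow> real" where
  "I_S_X2 P = mutual_info (map_pmf (\<lambda>(s,x1,x2). (s,x2)) P)"

definition swap12 :: "dist3 \<Rightarrow> dist3" where
  "swap12 P = map_pmf (\<lambda>(s,x1,x2). (s,x2,x1)) P"

text \<open>Continuity: on distributions supported in any fixed finite set (i.e. with fixed
  finite alphabets), F is (sequentially) continuous in the probability vector.\<close>
definition continuous_dist :: "(dist3 \<Rightarrow> real) \<Rightarrow> bool" where
  "continuous_dist F \<longleftrightarrow>
     (\<forall>A Ps P. finite A \<longrightarrow> (\<forall>n. set_pmf (Ps n) \<subseteq> A) \<longrightarrow> set_pmf P \<subseteq> A \<longrightarrow>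
        (\<forall>x. (\<lambda>n. pmf (Ps n) x) \<longlonglongrightarrow> pmf P x) \<longrightarrow> (\<lambda>n. F (Ps n)) \<longlonglongrightarrow> F P)"

text \<open>Nonnegative bivariate information decomposition. UI is a single function;
  UI(S;X1\X2) = UI P and UI(S;X2\X1) = UI (swap12 P).\<close>
definition nonneg_decomp :: "(dist3 \<Rightarrow> real) \<Rightarrow> (dist3 \<Rightarrow> real) \<Rightarrow> (dist3 \<Rightarrow> real) \<Rightarrow> bool" where
  "nonneg_decomp SI UI CI \<longleftrightarrow>
     continuous_dist SI \<and> continuous_dist UI \<and> continuous_dist CI \<and>
     (\<forall>P. fin_dist P \<longrightarrow>
        SI P \<ge> 0 \<and> UI P \<ge> 0 \<and> CI P \<ge> 0 \<and>
        I_S_X1X2 P = SI P + CI P + UI P + UI (swap12 P) \<and>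
        I_S_X1 P = SI P + UI P \<and>
        I_S_X2 P = SI P + UI (swap12 P))"

definition markov_chain :: "('a \<times> 'b \<times> 'c) pmf \<Rightarrow> bool" where
  "markov_chain R \<longleftrightarrow>
     (\<forall>a b c. pmf R (a,b,c) * pmf (map_pmf (\<lambda>(a,b,c). b) R) b =
              pmf (map_pmf (\<lambda>(a,b,c). (a,b)) R) (a,b) * pmf (map_pmf (\<lambda>(a,b,c). (b,c)) R) (b,c))"

definition blackwell :: "(dist3 \<Rightarrow> real) \<Rightarrow> bool" where
  "blackwell UI \<longleftrightarrow>
     (\<forall>P. fin_dist P \<longrightarrow>
        (UI P = 0 \<longleftrightarrow>
          (\<exists>Q :: (nat \<times> nat \<times> nat \<times> nat) pmf.
             fin_dist Q \<and>
             map_pmf (\<lambda>(s,x1,x2,y). (s,x1,x2)) Q = P \<and>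
             markov_chain (map_pmf (\<lambda>(s,x1,x2,y). (s,x2,y)) Q) \<and>
             map_pmf (\<lambda>(s,x1,x2,y). (s,y)) Q = map_pmf (\<lambda>(s,x1,x2). (s,x1)) P)))"

definition left_monotone :: "(dist3 \<Rightarrow> real) \<Rightarrow> bool" where
  "left_monotone SI \<longleftrightarrow>
     (\<forall>P (f :: nat \<Rightarrow> nat). fin_dist P \<longrightarrow>
        SI P \<ge> SI (map_pmf (\<lambda>(s,x1,x2). (f s, x1, x2)) P))"

end

theory Submission imports Defs begin

text \<open>Let S be uniform on {0,1,2,3}, let X2 be a function of S, and let X1 be uniform on a
  two-element set depending on S div 2, such that coarsening S to S div 2 makes the pairs
  (S div 2, X1) and (S div 2, X2) equally distributed. Then I(S;X1) = I(S div 2;X1) = 1/2.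
  For the coarsened target, X1' := X2 witnesses the Blackwell condition, so UI vanishes and
  SI(S div 2;X1,X2) = 1/2. For S itself, X1 is not garbled from X2: given S = 1 or S = 3 the
  variable X2 takes the same value 2, so any X1' with S - X2 - X1' has the same conditional law
  under S = 1 and S = 3, whereas X1 = 0 is possible only for S = 1. Hence UI > 0 and
  SI(S;X1,X2) < 1/2, contradicting left monotonicity.\<close>

lemma pmf_map_pmf_of_set:
  assumes "finite A" "A \<noteq> {}"
  shows "pmf (map_pmf g (pmf_of_set A)) z = card (A \<inter> g -` {z}) / card A"
  using assms by (simp add: pmf_map measure_pmf_of_set)

lemma pmf_map_diag:
  "pmf (map_pmf (\<lambda>x. (x, x)) M) (x, y) = (if x = y then pmf M x else 0)"
proof (cases "x = y")
  case True
  then show ?thesis using pmf_map_inj'[of "\<lambda>x. (x, x)" M x] by (simp add: inj_def)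
next
  case False
  then have "(x, y) \<notin> set_pmf (map_pmf (\<lambda>x. (x, x)) M)" by auto
  then show ?thesis using False by (simp add: pmf_eq_0_set_pmf)
qed

lemma pmf_map_dup_snd:
  "pmf (map_pmf (\<lambda>(a, b). (a, b, b)) M) (a, b, c) = (if b = c then pmf M (a, b) else 0)"
proof (cases "b = c")
  case True
  then show ?thesis using pmf_map_inj'[of "\<lambda>(a, b). (a, b, b)" M "(a, b)"] by (simp add: inj_def)
next
  case False
  then have "(a, b, c) \<notin> set_pmf (map_pmf (\<lambda>(a, b). (a, b, b)) M)" by auto
  then show ?thesis using False by (simp add: pmf_eq_0_set_pmf)
qed

lemma markov_chain_dup_snd:
  fixes M :: "('a \<times> 'b) pmf"
  shows "markov_chain (map_pmf (\<lambda>(a, b). (a, b, b)) M)"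
proof -
  have "map_pmf (\<lambda>(a, b, c). b) (map_pmf (\<lambda>(a, b). (a, b, b)) M) = map_pmf snd M"
    and "map_pmf (\<lambda>(a, b, c). (a, b)) (map_pmf (\<lambda>(a, b). (a, b, b)) M) = M"
    and "map_pmf (\<lambda>(a, b, c). (b, c)) (map_pmf (\<lambda>(a, b). (a, b, b)) M) =
           map_pmf (\<lambda>b. (b, b)) (map_pmf snd M)"
    by (simp_all add: map_pmf_comp case_prod_beta)
  then show ?thesis
    unfolding markov_chain_def by (simp add: pmf_map_dup_snd pmf_map_diag)
qed

lemma pmf_map_fst_thd_eq_if_snd_determined:
  fixes R :: "('a \<times> 'b \<times> 'c) pmf"
  assumes "\<And>b. (a, b) \<in> set_pmf (map_pmf (\<lambda>(a, b, c). (a, b)) R) \<Longrightarrow> b = b0"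
  shows "pmf (map_pmf (\<lambda>(a, b, c). (a, c)) R) (a, c) = pmf R (a, b0, c)"
proof -
  have "(\<lambda>(a, b, c). (a, c)) -` {(a, c)} \<inter> set_pmf R = {(a, b0, c)} \<inter> set_pmf R"
    using assms by force
  then have "measure R ((\<lambda>(a, b, c). (a, c)) -` {(a, c)}) = measure R {(a, b0, c)}"
    by (metis measure_Int_set_pmf)
  then show ?thesis by (simp add: pmf_map measure_pmf_single)
qed

lemma markov_chain_outer_marginal:
  fixes R :: "('a \<times> 'b \<times> 'c) pmf"
  assumes "markov_chain R"
    and "\<And>b. (a, b) \<in> set_pmf (map_pmf (\<lambda>(a, b, c). (a, b)) R) \<Longrightarrow> b = b0"
  shows "pmf (map_pmf (\<lambda>(a, b, c). (a, c)) R) (a, c) * pmf (map_pmf (\<lambda>(a, b, c). b) R) b0 =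
    pmf (map_pmf (\<lambda>(a, b, c). (a, b)) R) (a, b0) * pmf (map_pmf (\<lambda>(a, b, c). (b, c)) R) (b0, c)"
proof -
  have "pmf R (a, b0, c) * pmf (map_pmf (\<lambda>(a, b, c). b) R) b0 =
      pmf (map_pmf (\<lambda>(a, b, c). (a, b)) R) (a, b0) * pmf (map_pmf (\<lambda>(a, b, c). (b, c)) R) (b0, c)"
    using assms(1) unfolding markov_chain_def by blast
  then show ?thesis by (simp only: pmf_map_fst_thd_eq_if_snd_determined[OF assms(2)])
qed

lemma blackwell_UI_eq_0_if_marginals_eq:
  assumes "blackwell UI" "fin_dist P"
    and "map_pmf (\<lambda>(s, x1, x2). (s, x2)) P = map_pmf (\<lambda>(s, x1, x2). (s, x1)) P"
  shows "UI P = 0"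
proof -
  define Q where "Q = map_pmf (\<lambda>(s, x1, x2). (s, x1, x2, x2)) P"
  have "fin_dist Q" using \<open>fin_dist P\<close> unfolding fin_dist_def Q_def by simp
  moreover have "map_pmf (\<lambda>(s, x1, x2, y). (s, x1, x2)) Q = P"
    unfolding Q_def by (simp add: map_pmf_comp case_prod_beta)
  moreover have "map_pmf (\<lambda>(s, x1, x2, y). (s, x2, y)) Q =
      map_pmf (\<lambda>(a, b). (a, b, b)) (map_pmf (\<lambda>(s, x1, x2). (s, x2)) P)"
    unfolding Q_def by (simp add: map_pmf_comp case_prod_beta)
  then have "markov_chain (map_pmf (\<lambda>(s, x1, x2, y). (s, x2, y)) Q)"
    by (simp add: markov_chain_dup_snd)
  moreover have "map_pmf (\<lambda>(s, x1, x2, y). (s, y)) Q = map_pmf (\<lambda>(s, x1, x2). (s, x2)) P"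
    unfolding Q_def by (auto simp: map_pmf_comp intro!: map_pmf_cong)
  then have "map_pmf (\<lambda>(s, x1, x2, y). (s, y)) Q = map_pmf (\<lambda>(s, x1, x2). (s, x1)) P"
    using assms(3) by simp
  ultimately show ?thesis using assms(1,2) unfolding blackwell_def by blast
qed

lemma SI_eq_I_S_X1_minus_UI:
  assumes "nonneg_decomp SI UI CI" "fin_dist P"
  shows "SI P = I_S_X1 P - UI P"
  using assms unfolding nonneg_decomp_def by auto

definition counterexample_support :: "(nat \<times> nat \<times> nat) set" where
  "counterexample_support =
     {(0,0,0), (0,2,0), (1,0,2), (1,2,2), (2,1,1), (2,2,1), (3,1,2), (3,2,2)}"

definition counterexample :: dist3 where
  "counterexample = pmf_of_set counterexample_support"

definition coarsen_target :: "dist3 \<Rightarrow> dist3" where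
  "coarsen_target P = map_pmf (\<lambda>(s, x1, x2). (s div 2, x1, x2)) P"

lemma counterexample_support_finite_nonempty:
  "finite counterexample_support" "counterexample_support \<noteq> {}"
  unfolding counterexample_support_def by simp_all

lemma fin_dist_counterexample: "fin_dist counterexample"
  unfolding fin_dist_def counterexample_def
  using counterexample_support_finite_nonempty by simp

lemma fin_dist_coarsen_target: "fin_dist P \<Longrightarrow> fin_dist (coarsen_target P)"
  unfolding fin_dist_def coarsen_target_def by simp

lemma left_monotone_coarsen_target:
  "left_monotone SI \<Longrightarrow> fin_dist P \<Longrightarrow> SI (coarsen_target P) \<le> SI P"
  unfolding left_monotone_def coarsen_target_def by (drule spec[of _ P], drule spec[of _ "\<lambda>s. s div 2"]) simp

lemma I_S_X1_counterexample: "I_S_X1 counterexample = 1/2"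
  unfolding I_S_X1_def mutual_info_def counterexample_def
  by (simp add: counterexample_support_def pmf_map_pmf_of_set map_pmf_comp insert_absorb)

lemma I_S_X1_coarsen_counterexample: "I_S_X1 (coarsen_target counterexample) = 1/2"
  unfolding I_S_X1_def mutual_info_def counterexample_def coarsen_target_def
  by (simp add: counterexample_support_def pmf_map_pmf_of_set map_pmf_comp insert_absorb
      case_prod_beta)

text \<open>The swap of the support points (0,2,0) \<leftrightarrow> (1,0,2) and (2,2,1) \<leftrightarrow> (3,1,2) preserves the
  uniform law and exchanges X1 and X2 up to the coarsening of S.\<close>

lemma coarsen_counterexample_marginals_eq:
  "map_pmf (\<lambda>(s, x1, x2). (s, x2)) (coarsen_target counterexample) =
   map_pmf (\<lambda>(s, x1, x2). (s, x1)) (coarsen_target counterexample)"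
proof -
  define \<sigma> :: "nat \<times> nat \<times> nat \<Rightarrow> nat \<times> nat \<times> nat" where
    "\<sigma> x = (if x = (0,2,0) then (1,0,2) else if x = (1,0,2) then (0,2,0)
       else if x = (2,2,1) then (3,1,2) else if x = (3,1,2) then (2,2,1) else x)" for x
  have "inj_on \<sigma> counterexample_support" "\<sigma> ` counterexample_support = counterexample_support"
    unfolding counterexample_support_def inj_on_def \<sigma>_def by auto
  then have \<sigma>_invariant: "map_pmf \<sigma> counterexample = counterexample"
    unfolding counterexample_def
    using map_pmf_of_set_inj counterexample_support_finite_nonempty by metis
  have "map_pmf (\<lambda>(s, x1, x2). (s div 2, x1)) counterexample =
        map_pmf ((\<lambda>(s, x1, x2). (s div 2, x2)) \<circ> \<sigma>) counterexample"
    by (rule map_pmf_cong) (auto simp: counterexample_def counterexample_support_finite_nonempty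
        counterexample_support_def \<sigma>_def)
  also have "\<dots> = map_pmf (\<lambda>(s, x1, x2). (s div 2, x2)) (map_pmf \<sigma> counterexample)"
    by (simp add: map_pmf_comp comp_def)
  also have "\<dots> = map_pmf (\<lambda>(s, x1, x2). (s div 2, x2)) counterexample"
    by (simp only: \<sigma>_invariant)
  moreover have "map_pmf (\<lambda>(s, x1, x2). (s, x1)) (coarsen_target counterexample) =
      map_pmf (\<lambda>(s, x1, x2). (s div 2, x1)) counterexample"
    and "map_pmf (\<lambda>(s, x1, x2). (s, x2)) (coarsen_target counterexample) =
      map_pmf (\<lambda>(s, x1, x2). (s div 2, x2)) counterexample"
    by (auto simp: coarsen_target_def map_pmf_comp intro!: map_pmf_cong)
  ultimately show ?thesis by simp
qed

lemma counterexample_not_garbling: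
  assumes "map_pmf (\<lambda>(s, x1, x2, y). (s, x1, x2)) Q = counterexample"
    and "markov_chain (map_pmf (\<lambda>(s, x1, x2, y). (s, x2, y)) Q)"
    and "map_pmf (\<lambda>(s, x1, x2, y). (s, y)) Q = map_pmf (\<lambda>(s, x1, x2). (s, x1)) counterexample"
  shows False
proof -
  define R where "R = map_pmf (\<lambda>(s, x1, x2, y). (s, x2, y)) Q"
  have R_S_X2: "map_pmf (\<lambda>(a, b, c). (a, b)) R = map_pmf (\<lambda>(s, x1, x2). (s, x2)) counterexample"
    and R_X2: "map_pmf (\<lambda>(a, b, c). b) R = map_pmf (\<lambda>(s, x1, x2). x2) counterexample"
    unfolding R_def assms(1)[symmetric] by (simp_all add: map_pmf_comp case_prod_beta)
  have R_S_Y: "map_pmf (\<lambda>(a, b, c). (a, c)) R = map_pmf (\<lambda>(s, x1, x2). (s, x1)) counterexample"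
    unfolding R_def assms(3)[symmetric] by (auto simp: map_pmf_comp intro!: map_pmf_cong)
  have X2_determined: "(s, b) \<in> set_pmf (map_pmf (\<lambda>(a, b, c). (a, b)) R) \<Longrightarrow> b = 2"
    if "s = 1 \<or> s = 3" for s b
    using that counterexample_support_finite_nonempty
    by (auto simp: R_S_X2 counterexample_def counterexample_support_def)
  have "pmf (map_pmf (\<lambda>(a, b, c). (a, c)) R) (s, 0) * (1/2) =
      1/4 * pmf (map_pmf (\<lambda>(a, b, c). (b, c)) R) (2, 0)"
    if "s = 1 \<or> s = 3" for s
  proof -
    have "pmf (map_pmf (\<lambda>(a, b, c). b) R) 2 = 1/2"
      and "pmf (map_pmf (\<lambda>(a, b, c). (a, b)) R) (s, 2) = 1/4"
      using that counterexample_support_finite_nonempty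
      by (auto simp: R_S_X2 R_X2 counterexample_def pmf_map_pmf_of_set counterexample_support_def)
    with markov_chain_outer_marginal[OF assms(2)[folded R_def] X2_determined[OF that], where c = 0]
    show ?thesis by simp
  qed
  from this[of 1] this[of 3] show False
    using counterexample_support_finite_nonempty
    by (simp add: R_S_Y counterexample_def pmf_map_pmf_of_set counterexample_support_def)
qed

theorem corollary1:
  shows "\<not> (\<exists>SI UI CI. nonneg_decomp SI UI CI \<and> blackwell UI \<and> left_monotone SI)"
proof
  assume "\<exists>SI UI CI. nonneg_decomp SI UI CI \<and> blackwell UI \<and> left_monotone SI"
  then obtain SI UI CI where decomp: "nonneg_decomp SI UI CI" and "blackwell UI"
    and "left_monotone SI" by blast
  let ?P = counterexample and ?P' = "coarsen_target counterexample"
  have fin: "fin_dist ?P" "fin_dist ?P'"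
    using fin_dist_counterexample fin_dist_coarsen_target by auto
  have "UI ?P' = 0"
    using blackwell_UI_eq_0_if_marginals_eq[OF \<open>blackwell UI\<close> fin(2)]
      coarsen_counterexample_marginals_eq by simp
  moreover have "UI ?P \<noteq> 0"
    using \<open>blackwell UI\<close> fin(1) counterexample_not_garbling unfolding blackwell_def by blast
  moreover have "UI ?P \<ge> 0" using decomp fin(1) unfolding nonneg_decomp_def by blast
  moreover have "SI ?P' \<le> SI ?P"
    using left_monotone_coarsen_target \<open>left_monotone SI\<close> fin(1) by blast
  ultimately show False
    using SI_eq_I_S_X1_minus_UI[OF decomp] fin I_S_X1_counterexample
      I_S_X1_coarsen_counterexample by fastforce
qed

end
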